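(* Let $\phi=\phi_{\underline\alpha}$ be a completely positive map in $\mathcal J_1$ given in Kraus form by a family $\underline\alpha=\{\alpha_i\}_{i\in\mathbb N}\subset\mathcal B(\mathcal H)$. Then $\phi$ is positivity improving if and only if for every $0\ne x\in\mathcal H$ the closed linear span of $\{\alpha_i^\star x: i\in\mathbb N\}$ equals $\mathcal H$.
   Context: Let $\mathcal H$ be a complex separable Hilbert space, $\mathcal B(\mathcal H)$ the bounded operators, $\mathbb I$ the identity, and $\mathcal J_1$ the trace-class operators with norm $\|A\|_1=\operatorname{tr}|A|$, $|A|=(A^\star A)^{1/2}$. For self-adjoint $A$, $A\ge 0$ means $\langle x,Ax\rangle\ge 0$ for all $x$, and $A>0$ means $\langle x,Ax\rangle>0$ for all $x\ne0$. $\mathcal C_1=\{A\in\mathcal J_1:A\ge0\}$. A positive map in $\mathcal J_1$ is a linear map $\phi:\mathcal J_1\to\mathcal J_1$ with $\phi(\mathcal C_1)\subseteq\mathcal C_1$; it is $n$-positive if $\phi\otimes\mathrm{id}_{M_n}$ maps positive elements of $\mathcal J_1(\mathcal H\otimes\mathbb C^n)$ (i.e. positive $n\times n$ operator matrices with entries in $\mathcal J_1$) to positive elements, and completely positive if it is $n$-positive for all $n$. Kraus form: given $\underline\alpha=\{\alpha_i\}_{i\in\mathbb N}\subset\mathcal B(\mathcal H)$ with $\sum_{i\in K}\alpha_i^\star\alpha_i\le c\,\mathbb I$ for some constant $c$ and all finite $K\subset\mathbb N$, $\phi_{\underline\alpha}(A)=\sum_i\alpha_iA\alpha_i^\star$,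 defined as the limit of the finite partial sums; every completely positive map on $\mathcal J_1$ has such a representation. A positive map $\phi$ is positivity improving if $\phi(A)>0$ for every $A\in\mathcal C_1$, $A\ne0$. *)

theory Defs
  imports "HOL-Analysis.Analysis"
begin

class complex_vector_sp = real_vector +
  fixes scaleC :: "complex \<Rightarrow> 'a \<Rightarrow> 'a"
  assumes scaleC_add_right: "scaleC a (x + y) = scaleC a x + scaleC a y"
    and scaleC_add_left: "scaleC (a + b) x = scaleC a x + scaleC b x"
    and scaleC_scaleC: "scaleC a (scaleC b x) = scaleC (a * b) x"
    and scaleC_one: "scaleC 1 x = x"
    and scaleR_scaleC: "scaleR r x = scaleC (complex_of_real r) x"

class complex_inner = complex_vector_sp + real_normed_vector +
  fixes cinner :: "'a \<Rightarrow> 'a \<Rightarrow> complex"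
  assumes cinner_commute: "cinner x y = cnj (cinner y x)"
    and cinner_add_left: "cinner (x + y) z = cinner x z + cinner y z"
    and cinner_scaleC_left: "cinner (scaleC r x) y = cnj r * cinner x y"
    and cinner_ge_zero: "0 \<le> Re (cinner x x) \<and> Im (cinner x x) = 0"
    and cinner_eq_zero_iff: "cinner x x = 0 \<longleftrightarrow> x = 0"
    and norm_eq_sqrt_cinner: "norm x = sqrt (Re (cinner x x))"

class chilbert_space = complex_inner + complete_space

definition separable_space :: "'a::topological_space itself \<Rightarrow> bool" where
  "separable_space _ \<longleftrightarrow> (\<exists>D::'a set. countable D \<and> closure D = UNIV)"

definition bounded_op :: "('a::complex_inner \<Rightarrow> 'a) \<Rightarrow> bool" where
  "bounded_op f \<longleftrightarrow> (\<forall>x y. f (x + y) = f x + f y) \<and> (\<forall>c x. f (scaleC c x) = scaleC c (f x))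
     \<and> (\<exists>K. \<forall>x. norm (f x) \<le> norm x * K)"

definition adjoint :: "('a::complex_inner \<Rightarrow> 'a) \<Rightarrow> ('a \<Rightarrow> 'a)" where
  "adjoint f = (THE g. \<forall>x y. cinner (f x) y = cinner x (g y))"

definition op_nonneg :: "('a::complex_inner \<Rightarrow> 'a) \<Rightarrow> bool" where
  "op_nonneg A \<longleftrightarrow> (\<forall>x. 0 \<le> Re (cinner x (A x)) \<and> Im (cinner x (A x)) = 0)"

definition op_pos :: "('a::complex_inner \<Rightarrow> 'a) \<Rightarrow> bool" where
  "op_pos A \<longleftrightarrow> (\<forall>x. x \<noteq> 0 \<longrightarrow> 0 < Re (cinner x (A x)) \<and> Im (cinner x (A x)) = 0)"

definition orthonormal :: "'a::complex_inner set \<Rightarrow> bool" where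
  "orthonormal E \<longleftrightarrow> (\<forall>e\<in>E. cinner e e = 1) \<and> (\<forall>e\<in>E. \<forall>f\<in>E. e \<noteq> f \<longrightarrow> cinner e f = 0)"

(* For positive A one has
  |A| = A, so tr |A| = \<Sum>_e \<langle>e, A e\<rangle> (basis independent); finiteness over every
  orthonormal set is equivalent to finiteness over an orthonormal basis. *)
definition pos_trace_class :: "('a::complex_inner \<Rightarrow> 'a) \<Rightarrow> bool" where
  "pos_trace_class A \<longleftrightarrow> bounded_op A \<and> op_nonneg A \<and>
     (\<forall>E. orthonormal E \<longrightarrow> (\<lambda>e. Re (cinner e (A e))) summable_on E)"

definition kraus_family :: "(nat \<Rightarrow> 'a::complex_inner \<Rightarrow> 'a) \<Rightarrow> bool" where
  "kraus_family \<alpha> \<longleftrightarrow> (\<forall>i. bounded_op (\<alpha> i)) \<and>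
     (\<exists>c. \<forall>K x. finite K \<longrightarrow>
        Re (cinner x (\<Sum>i\<in>K. adjoint (\<alpha> i) (\<alpha> i x))) \<le> c * Re (cinner x x))"

(* Since the series converges in trace norm, the
  pointwise limit agrees with the trace-norm limit. *)
definition kraus_map :: "(nat \<Rightarrow> 'a::complex_inner \<Rightarrow> 'a) \<Rightarrow> ('a \<Rightarrow> 'a) \<Rightarrow> ('a \<Rightarrow> 'a)" where
  "kraus_map \<alpha> A = (\<lambda>x. \<Sum>\<^sub>\<infinity>i\<in>UNIV. \<alpha> i (A (adjoint (\<alpha> i) x)))"

definition positivity_improving :: "(('a::complex_inner \<Rightarrow> 'a) \<Rightarrow> ('a \<Rightarrow> 'a)) \<Rightarrow> bool" where
  "positivity_improving \<phi> \<longleftrightarrow> (\<forall>A. pos_trace_class A \<and> A \<noteq> (\<lambda>_. 0) \<longrightarrow> op_pos (\<phi> A))"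

abbreviation cspan :: "'a::complex_vector_sp set \<Rightarrow> 'a set" where
  "cspan \<equiv> module.span scaleC"

end

theory Submission
  imports Defs
begin

text \<open>
  If the vectors \<alpha>_i^* x do not span a dense subspace, pick e \<noteq> 0 orthogonal to all of them:
  the rank-one operator |e><e| satisfies \<phi>(|e><e|) x = \<Sum>_i <e, \<alpha>_i^* x> \<alpha>_i e = 0, so \<phi> is
  not positivity improving. Conversely <x, \<phi>(A) x> = \<Sum>_i <\<alpha>_i^* x, A \<alpha>_i^* x>, and all terms
  vanish only if A kills every \<alpha>_i^* x, i.e. (their span being dense) only if A = 0.

  The substance is the convergence of the Kraus series \<Sum>_i \<alpha>_i A \<alpha>_i^* x. Writing
  <v, A v> = \<Sum>_k |<g_k, v>|^2 with \<Sum>_k ||g_k||^2 \<le> tr A, the Kraus bound \<Sum>_i \<alpha>_i^* \<alpha>_i \<le> c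
  gives \<Sum>_i <\<alpha>_i^* w, A \<alpha>_i^* w> \<le> c tr A ||w||^2 for every w, and Cauchy--Schwarz for the
  semi-inner product <u, A v> turns this into a Cauchy criterion for the partial sums.
  Orthogonal projections onto closed spans, the Riesz representation (hence adjoints) and the
  vectors g_k all come from Gram--Schmidt orthonormalisation along dense sequences, which is
  where separability enters.
\<close>

interpretation complex_module: module "scaleC :: complex \<Rightarrow> 'a::complex_vector_sp \<Rightarrow> 'a"
  by standard (auto simp: scaleC_add_right scaleC_add_left scaleC_scaleC scaleC_one)

lemma cnj_mult_self: "cnj a * a = complex_of_real ((cmod a)\<^sup>2)"
  by (metis complex_norm_square mult.commute of_real_power)

lemma le_mult_if_quadratic_nonneg:
  fixes X Y A :: real
  assumes "Y \<ge> 0" and quadratic_nonneg: "\<And>r. 0 \<le> X - 2 * r * A + r\<^sup>2 * A * Y"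
  shows "A \<le> X * Y"
proof (cases "Y = 0")
  case True
  show ?thesis
  proof (rule ccontr)
    assume "\<not> ?thesis"
    then have "A > 0" using True by simp
    have "0 \<le> X - 2 * ((X + 1) / (2 * A)) * A"
      using quadratic_nonneg[of "(X + 1) / (2 * A)"] True by simp
    also have "\<dots> = -1" using \<open>A > 0\<close> by (simp add: field_simps)
    finally show False by simp
  qed
next
  case False
  with \<open>Y \<ge> 0\<close> have "Y > 0" by simp
  have "0 \<le> X - 2 * (1 / Y) * A + (1 / Y)\<^sup>2 * A * Y" by (rule quadratic_nonneg)
  also have "\<dots> = X - A / Y" using \<open>Y > 0\<close> by (simp add: field_simps power2_eq_square)
  finally show ?thesis using \<open>Y > 0\<close> by (simp add: field_simps)
qed

lemma summable_on_cauchy: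
  fixes f :: "'i \<Rightarrow> 'a::{real_normed_vector, complete_space}"
  assumes "\<And>\<epsilon>. \<epsilon> > 0 \<Longrightarrow> \<exists>F. finite F \<and> (\<forall>G. finite G \<and> G \<inter> F = {} \<longrightarrow> norm (sum f G) < \<epsilon>)"
  shows "f summable_on UNIV"
proof -
  have "\<exists>P. eventually P (finite_subsets_at_top UNIV) \<and>
          (\<forall>F F'. P F \<and> P F' \<longrightarrow> dist (sum f F) (sum f F') < \<epsilon>)" if "\<epsilon> > 0" for \<epsilon>
  proof -
    obtain F0 where F0: "finite F0" "\<And>G. finite G \<Longrightarrow> G \<inter> F0 = {} \<Longrightarrow> norm (sum f G) < \<epsilon> / 2"
      using assms[of "\<epsilon> / 2"] \<open>\<epsilon> > 0\<close> by auto
    define P where "P F \<longleftrightarrow> finite F \<and> F0 \<subseteq> F" for F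
    have "eventually P (finite_subsets_at_top UNIV)"
      unfolding P_def eventually_finite_subsets_at_top using F0(1) by auto
    moreover have "dist (sum f F1) (sum f F2) < \<epsilon>" if "P F1" "P F2" for F1 F2
    proof -
      have "sum f F1 = sum f F0 + sum f (F1 - F0)" "sum f F2 = sum f F0 + sum f (F2 - F0)"
        using that unfolding P_def by (metis add.commute sum.subset_diff)+
      then have "dist (sum f F1) (sum f F2) \<le> norm (sum f (F1 - F0)) + norm (sum f (F2 - F0))"
        by (simp add: dist_norm norm_triangle_ineq4)
      also have "\<dots> < \<epsilon> / 2 + \<epsilon> / 2"
        using that unfolding P_def by (intro add_strict_mono F0(2)) auto
      finally show ?thesis by simp
    qed
    ultimately show ?thesis by blast
  qed
  then have "cauchy_filter (filtermap (sum f) (finite_subsets_at_top UNIV))"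
    by (simp add: cauchy_filter_metric_filtermap)
  moreover have "complete (UNIV::'a set)"
    by (meson Cauchy_convergent UNIV_I complete_def convergent_def)
  ultimately obtain L where "(sum f \<longlongrightarrow> L) (finite_subsets_at_top UNIV)"
    using complete_uniform[where S=UNIV] by (force simp add: filterlim_def)
  then show ?thesis
    using summable_on_def has_sum_def by blast
qed

lemma nonneg_summable_on_small_tails:
  fixes g :: "'i \<Rightarrow> real"
  assumes "g summable_on UNIV" "\<And>i. g i \<ge> 0" "\<epsilon> > 0"
  obtains F where "finite F" "\<And>G. finite G \<Longrightarrow> G \<inter> F = {} \<Longrightarrow> sum g G < \<epsilon>"
proof -
  have "(sum g \<longlongrightarrow> infsum g UNIV) (finite_subsets_at_top UNIV)"
    using assms(1) has_sum_def has_sum_infsum by blast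
  then have "eventually (\<lambda>F. dist (sum g F) (infsum g UNIV) < \<epsilon>) (finite_subsets_at_top UNIV)"
    using assms(3) tendstoD by blast
  then obtain F where F: "finite F" "infsum g UNIV - sum g F < \<epsilon>"
    unfolding eventually_finite_subsets_at_top dist_real_def by force
  have "sum g G < \<epsilon>" if "finite G" "G \<inter> F = {}" for G
  proof -
    have "sum g F + sum g G = sum g (F \<union> G)"
      using that F(1) by (simp add: sum.union_disjoint inf_commute)
    also have "\<dots> \<le> infsum g UNIV"
      using that F(1) assms(2) by (intro finite_sum_le_infsum[OF assms(1)]) auto
    finally show ?thesis using F(2) by simp
  qed
  with F(1) show ?thesis by (rule that)
qed

lemma summable_on_if_norm_sum_sq_le:
  fixes f :: "'i \<Rightarrow> 'a::{real_normed_vector, complete_space}" and g :: "'i \<Rightarrow> real"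
  assumes "g summable_on UNIV" "\<And>i. g i \<ge> 0"
    and bound: "\<And>G. finite G \<Longrightarrow> (norm (sum f G))\<^sup>2 \<le> M * sum g G"
  shows "f summable_on UNIV"
proof (rule summable_on_cauchy)
  fix \<epsilon> :: real assume "\<epsilon> > 0"
  define M' where "M' = max M 1"
  have "\<epsilon>\<^sup>2 / M' > 0"
    using \<open>\<epsilon> > 0\<close> by (simp add: M'_def)
  then obtain F where F: "finite F" "\<And>G. finite G \<Longrightarrow> G \<inter> F = {} \<Longrightarrow> sum g G < \<epsilon>\<^sup>2 / M'"
    using nonneg_summable_on_small_tails[OF assms(1,2)] by blast
  have "norm (sum f G) < \<epsilon>" if "finite G" "G \<inter> F = {}" for G
  proof -
    have "(norm (sum f G))\<^sup>2 \<le> M' * sum g G"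
      using bound[OF \<open>finite G\<close>] assms(2)
      by (smt (verit, best) M'_def mult_right_mono sum_nonneg)
    also have "\<dots> < \<epsilon>\<^sup>2"
      using F(2)[OF that] by (simp add: M'_def field_simps)
    finally show ?thesis
      using \<open>\<epsilon> > 0\<close> by (simp add: power_less_imp_less_base)
  qed
  with F(1) show "\<exists>F. finite F \<and> (\<forall>G. finite G \<and> G \<inter> F = {} \<longrightarrow> norm (sum f G) < \<epsilon>)"
    by blast
qed

lemma has_sum_sum:
  fixes f :: "'i \<Rightarrow> 'j \<Rightarrow> 'b::topological_comm_monoid_add"
  assumes "finite I" and "\<And>i. i \<in> I \<Longrightarrow> (f i has_sum S i) A"
  shows "((\<lambda>j. \<Sum>i\<in>I. f i j) has_sum (\<Sum>i\<in>I. S i)) A"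
  using assms by (induct I rule: finite_induct) (auto intro: has_sum_add)

section \<open>Semi-inner products: Bessel, Gram--Schmidt, Parseval\<close>

locale semi_inner_product =
  fixes s :: "'a::complex_vector_sp \<Rightarrow> 'a \<Rightarrow> complex"
  assumes add_left: "s (x + y) z = s x z + s y z"
    and scaleC_left: "s (scaleC c x) y = cnj c * s x y"
    and hermitian: "s x y = cnj (s y x)"
    and nonneg: "0 \<le> Re (s x x) \<and> Im (s x x) = 0"
begin

abbreviation qform :: "'a \<Rightarrow> real" where
  "qform x \<equiv> Re (s x x)"

lemma add_right: "s x (y + z) = s x y + s x z"
  by (metis add_left complex_cnj_add hermitian)

lemma scaleC_right: "s x (scaleC c y) = c * s x y"
  by (metis complex_cnj_cnj complex_cnj_mult hermitian scaleC_left)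

sublocale left: additive "\<lambda>x. s x z" for z
  by standard (rule add_left)

sublocale right: additive "s x" for x
  by standard (rule add_right)

declare left.zero[simp] right.zero[simp]

lemma qform_nonneg: "0 \<le> qform x"
  using nonneg by blast

lemma self_real: "s x x = complex_of_real (qform x)"
  using nonneg[of x] by (simp add: complex_eq_iff)

lemma cauchy_schwarz: "(cmod (s x y))\<^sup>2 \<le> qform x * qform y"
proof -
  define a where "a = s x y"
  have "0 \<le> qform x - 2 * r * (cmod a)\<^sup>2 + r\<^sup>2 * (cmod a)\<^sup>2 * qform y" for r :: real
  proof -
    define t where "t = complex_of_real r * cnj a"
    have "s (x - scaleC t y) (x - scaleC t y) = s x x - t * a - cnj t * cnj a + cnj t * t * s y y"
      by (simp add: left.diff right.diff scaleC_left scaleC_right hermitian[of y x] a_def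
          algebra_simps)
    also have "\<dots> = complex_of_real (qform x - 2 * r * (cmod a)\<^sup>2 + r\<^sup>2 * (cmod a)\<^sup>2 * qform y)"
    proof -
      have "t * a = complex_of_real (r * (cmod a)\<^sup>2)"
        "cnj t * cnj a = complex_of_real (r * (cmod a)\<^sup>2)"
        "cnj t * t = complex_of_real (r\<^sup>2 * (cmod a)\<^sup>2)"
        using cnj_mult_self[of a] by (simp_all add: t_def algebra_simps power2_eq_square)
      then show ?thesis
        by (subst (1 2) self_real) (simp add: algebra_simps)
    qed
    finally show ?thesis
      using qform_nonneg[of "x - scaleC t y"] by simp
  qed
  then show ?thesis
    unfolding a_def by (intro le_mult_if_quadratic_nonneg qform_nonneg)
qed

lemma null_left: "qform x = 0 \<Longrightarrow> s x y = 0"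
  using cauchy_schwarz[of x y] by simp

lemma null_right: "qform y = 0 \<Longrightarrow> s x y = 0"
  using null_left[of y x] hermitian[of x y] by simp

lemma qform_add_le: "qform (x + y) \<le> 2 * qform x + 2 * qform y"
proof -
  have parallelogram: "s (x + y) (x + y) + s (x - y) (x - y) = 2 * s x x + 2 * s y y"
    by (simp add: add_left add_right left.diff right.diff)
  have "qform (x + y) + qform (x - y) = 2 * qform x + 2 * qform y"
    using arg_cong[OF parallelogram, of Re] by simp
  then show ?thesis
    using qform_nonneg[of "x - y"] by linarith
qed

lemma sum_cmod_sq_le:
  "(\<Sum>i\<in>G. cmod (s (x i) (y i)))\<^sup>2 \<le> (\<Sum>i\<in>G. qform (x i)) * (\<Sum>i\<in>G. qform (y i))"
proof -
  have "(\<Sum>i\<in>G. cmod (s (x i) (y i))) \<le> (\<Sum>i\<in>G. sqrt (qform (x i)) * sqrt (qform (y i)))"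
    using cauchy_schwarz
    by (intro sum_mono) (metis real_le_rsqrt real_sqrt_mult norm_ge_zero)
  then have "(\<Sum>i\<in>G. cmod (s (x i) (y i)))\<^sup>2 \<le> (\<Sum>i\<in>G. sqrt (qform (x i)) * sqrt (qform (y i)))\<^sup>2"
    by (simp add: power_mono sum_nonneg)
  also have "\<dots> \<le> (\<Sum>i\<in>G. (sqrt (qform (x i)))\<^sup>2) * (\<Sum>i\<in>G. (sqrt (qform (y i)))\<^sup>2)"
    by (rule Cauchy_Schwarz_ineq_sum)
  finally show ?thesis
    by (simp add: qform_nonneg)
qed

definition orthonormal_or_zero :: "'i set \<Rightarrow> ('i \<Rightarrow> 'a) \<Rightarrow> bool" where
  "orthonormal_or_zero K e \<longleftrightarrow>
     (\<forall>j\<in>K. \<forall>k\<in>K. j \<noteq> k \<longrightarrow> s (e j) (e k) = 0) \<and> (\<forall>k\<in>K. s (e k) (e k) = 1 \<or> e k = 0)"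

definition fourier_sum :: "'i set \<Rightarrow> ('i \<Rightarrow> 'a) \<Rightarrow> 'a \<Rightarrow> 'a" where
  "fourier_sum K e v = (\<Sum>k\<in>K. scaleC (s (e k) v) (e k))"

lemma fourier_sum_add: "fourier_sum K e (u + v) = fourier_sum K e u + fourier_sum K e v"
  by (simp add: fourier_sum_def add_right scaleC_add_left sum.distrib)

lemma s_orthogonal_sum:
  assumes "finite K" "orthonormal_or_zero K e" "j \<in> K"
  shows "s (e j) (\<Sum>k\<in>K. scaleC (c k) (e k)) = c j * s (e j) (e j)"
proof -
  have "s (e j) (\<Sum>k\<in>K. scaleC (c k) (e k)) = (\<Sum>k\<in>K. c k * s (e j) (e k))"
    by (simp add: right.sum scaleC_right)
  also have "\<dots> = c j * s (e j) (e j) + (\<Sum>k\<in>K - {j}. c k * s (e j) (e k))"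
    using assms by (simp add: sum.remove)
  also have "(\<Sum>k\<in>K - {j}. c k * s (e j) (e k)) = 0"
    using assms by (intro sum.neutral) (auto simp: orthonormal_or_zero_def)
  finally show ?thesis by simp
qed

lemma s_orthogonal_sum_self:
  assumes "finite K" "orthonormal_or_zero K e"
  shows "s (\<Sum>k\<in>K. scaleC (c k) (e k)) (\<Sum>k\<in>K. scaleC (c k) (e k))
       = (\<Sum>k\<in>K. complex_of_real ((cmod (c k))\<^sup>2) * s (e k) (e k))"
proof -
  have "s (\<Sum>k\<in>K. scaleC (c k) (e k)) (\<Sum>k\<in>K. scaleC (c k) (e k))
      = (\<Sum>j\<in>K. cnj (c j) * s (e j) (\<Sum>k\<in>K. scaleC (c k) (e k)))"
    by (simp add: left.sum scaleC_left)
  also have "\<dots> = (\<Sum>j\<in>K. cnj (c j) * c j * s (e j) (e j))"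
    using assms by (intro sum.cong refl) (simp add: s_orthogonal_sum mult.assoc)
  finally show ?thesis by (simp add: cnj_mult_self)
qed

lemma qform_orthogonal_sum_le:
  assumes "finite K" "orthonormal_or_zero K e"
  shows "qform (\<Sum>k\<in>K. scaleC (c k) (e k)) \<le> (\<Sum>k\<in>K. (cmod (c k))\<^sup>2)"
proof -
  have "qform (\<Sum>k\<in>K. scaleC (c k) (e k)) = (\<Sum>k\<in>K. (cmod (c k))\<^sup>2 * qform (e k))"
    by (simp add: s_orthogonal_sum_self[OF assms] Re_sum)
  also have "\<dots> \<le> (\<Sum>k\<in>K. (cmod (c k))\<^sup>2)"
    using assms(2) by (intro sum_mono) (auto simp: orthonormal_or_zero_def)
  finally show ?thesis .
qed

lemma bessel_identity:
  assumes "finite K" "orthonormal_or_zero K e"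
  shows "qform (v - fourier_sum K e v) = qform v - (\<Sum>k\<in>K. (cmod (s (e k) v))\<^sup>2)"
proof -
  define Q where "Q = (\<Sum>k\<in>K. complex_of_real ((cmod (s (e k) v))\<^sup>2))"
  have "s v (fourier_sum K e v) = Q" "s (fourier_sum K e v) v = Q"
    unfolding fourier_sum_def Q_def right.sum left.sum scaleC_left scaleC_right
    by (auto intro!: sum.cong simp: hermitian[of v] cnj_mult_self mult.commute
        simp flip: complex_norm_square)
  moreover have "s (fourier_sum K e v) (fourier_sum K e v) = Q"
    unfolding fourier_sum_def s_orthogonal_sum_self[OF assms] Q_def
    using assms(2) by (intro sum.cong refl) (auto simp: orthonormal_or_zero_def)
  ultimately have "s (v - fourier_sum K e v) (v - fourier_sum K e v) = s v v - Q"
    by (simp add: left.diff right.diff)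
  then show ?thesis
    by (simp add: Q_def Re_sum)
qed

lemma bessel_inequality:
  assumes "finite K" "orthonormal_or_zero K e"
  shows "(\<Sum>k\<in>K. (cmod (s (e k) v))\<^sup>2) \<le> qform v"
  using bessel_identity[OF assms, of v] qform_nonneg[of "v - fourier_sum K e v"] by linarith

(* The form may be degenerate: a residual of length zero is sent to 0 instead of being
   normalised. *)
function gram_schmidt :: "(nat \<Rightarrow> 'a) \<Rightarrow> nat \<Rightarrow> 'a" where
  "gram_schmidt d n =
    (let r = d n - (\<Sum>k<n. scaleC (s (gram_schmidt d k) (d n)) (gram_schmidt d k))
     in if 0 < qform r then scaleC (complex_of_real (1 / sqrt (qform r))) r else 0)"
  by pat_completeness auto
termination by (relation "Wellfounded.measure snd") auto

declare gram_schmidt.simps[simp del]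

definition gs_residual :: "(nat \<Rightarrow> 'a) \<Rightarrow> nat \<Rightarrow> 'a" where
  "gs_residual d n = d n - fourier_sum {..<n} (gram_schmidt d) (d n)"

lemma gram_schmidt_eq:
  "gram_schmidt d n = (if 0 < qform (gs_residual d n)
     then scaleC (complex_of_real (1 / sqrt (qform (gs_residual d n)))) (gs_residual d n) else 0)"
  by (subst gram_schmidt.simps) (simp add: gs_residual_def fourier_sum_def Let_def)

lemma gram_schmidt_normal: "s (gram_schmidt d n) (gram_schmidt d n) = 1 \<or> gram_schmidt d n = 0"
proof (cases "0 < qform (gs_residual d n)")
  case True
  define c where "c = complex_of_real (1 / sqrt (qform (gs_residual d n)))"
  have "s (gram_schmidt d n) (gram_schmidt d n)
      = cnj c * c * complex_of_real (qform (gs_residual d n))"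
    using True by (subst (1 2) gram_schmidt_eq) (simp add: scaleC_left scaleC_right c_def
        flip: self_real)
  also have "\<dots> = 1"
    using True by (simp add: c_def flip: of_real_mult)
  finally show ?thesis by simp
qed (simp add: gram_schmidt_eq)

lemma gram_schmidt_orthogonal_less: "j < n \<Longrightarrow> s (gram_schmidt d j) (gram_schmidt d n) = 0"
proof (induction n arbitrary: j rule: less_induct)
  case (less n)
  have "orthonormal_or_zero {..<n} (gram_schmidt d)"
    unfolding orthonormal_or_zero_def
    by (metis gram_schmidt_normal hermitian complex_cnj_zero less.IH lessThan_iff linorder_neqE)
  then have "s (gram_schmidt d j) (fourier_sum {..<n} (gram_schmidt d) (d n))
      = s (gram_schmidt d j) (d n) * s (gram_schmidt d j) (gram_schmidt d j)"
    unfolding fourier_sum_def using less.prems by (intro s_orthogonal_sum) auto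
  then have "s (gram_schmidt d j) (gs_residual d n) = 0"
    using gram_schmidt_normal[of d j] by (auto simp: gs_residual_def right.diff)
  then show ?case
    by (subst gram_schmidt_eq) (simp add: scaleC_right)
qed

lemma gram_schmidt_orthogonal: "j \<noteq> k \<Longrightarrow> s (gram_schmidt d j) (gram_schmidt d k) = 0"
  by (metis gram_schmidt_orthogonal_less hermitian complex_cnj_zero linorder_neqE)

lemma orthonormal_or_zero_gram_schmidt: "orthonormal_or_zero K (gram_schmidt d)"
  by (simp add: orthonormal_or_zero_def gram_schmidt_normal gram_schmidt_orthogonal)

lemma gram_schmidt_complete: "qform (d n - fourier_sum {..n} (gram_schmidt d) (d n)) = 0"
proof -
  have split: "d n - fourier_sum {..n} (gram_schmidt d) (d n)
      = gs_residual d n - scaleC (s (gram_schmidt d n) (d n)) (gram_schmidt d n)"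
    by (simp add: gs_residual_def fourier_sum_def lessThan_Suc_atMost[symmetric] algebra_simps)
  have coefficient: "s (gram_schmidt d n) (d n) = s (gram_schmidt d n) (gs_residual d n)"
    using orthonormal_or_zero_gram_schmidt[of "{..<n}" d]
    by (simp add: gs_residual_def fourier_sum_def right.diff right.sum scaleC_right
        gram_schmidt_orthogonal_less hermitian[of "gram_schmidt d n"])
  show ?thesis
  proof (cases "0 < qform (gs_residual d n)")
    case True
    define \<sigma> where "\<sigma> = qform (gs_residual d n)"
    define c where "c = complex_of_real (1 / sqrt \<sigma>)"
    have "scaleC (s (gram_schmidt d n) (d n)) (gram_schmidt d n)
        = scaleC (cnj c * complex_of_real \<sigma> * c) (gs_residual d n)"
      unfolding coefficient using True
      by (subst (1 2) gram_schmidt_eq) (simp add: scaleC_left scaleC_scaleC \<sigma>_def c_def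
          flip: self_real)
    also have "cnj c * complex_of_real \<sigma> * c = 1"
      using True by (simp add: c_def \<sigma>_def flip: of_real_mult)
    finally show ?thesis by (simp add: split scaleC_one)
  next
    case False
    then show ?thesis
      using qform_nonneg[of "gs_residual d n"] by (simp add: split gram_schmidt_eq)
  qed
qed

lemma qform_eq_sum_gram_schmidt:
  assumes "finite K" "{..m} \<subseteq> K"
  shows "qform (d m) = (\<Sum>k\<in>K. (cmod (s (gram_schmidt d k) (d m)))\<^sup>2)"
proof -
  have "qform (d m) = (\<Sum>k\<in>{..m}. (cmod (s (gram_schmidt d k) (d m)))\<^sup>2)"
    using bessel_identity[where K="{..m}" and e="gram_schmidt d" and v="d m"]
      orthonormal_or_zero_gram_schmidt
    by (simp add: gram_schmidt_complete)
  also have "\<dots> \<le> (\<Sum>k\<in>K. (cmod (s (gram_schmidt d k) (d m)))\<^sup>2)"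
    using assms by (intro sum_mono2) auto
  finally show ?thesis
    using bessel_inequality[OF assms(1) orthonormal_or_zero_gram_schmidt] by (simp add: eq_iff)
qed

lemma parseval:
  assumes dense: "\<And>v \<epsilon>. \<epsilon> > 0 \<Longrightarrow> \<exists>n. qform (v - d n) < \<epsilon>"
  shows "((\<lambda>k. (cmod (s (gram_schmidt d k) v))\<^sup>2) has_sum qform v) UNIV"
proof -
  let ?f = "\<lambda>k. (cmod (s (gram_schmidt d k) v))\<^sup>2"
  let ?E = "\<lambda>n w. qform (w - fourier_sum {..n} (gram_schmidt d) w)"
  have bessel: "finite K \<Longrightarrow> sum ?f K \<le> qform v" for K
    by (rule bessel_inequality[OF _ orthonormal_or_zero_gram_schmidt])
  have residual: "?E n w = qform w - (\<Sum>k\<le>n. (cmod (s (gram_schmidt d k) w))\<^sup>2)" for n w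
    by (rule bessel_identity[OF _ orthonormal_or_zero_gram_schmidt]) simp
  have summable: "?f summable_on UNIV"
    using bessel by (intro nonneg_bdd_above_summable_on bdd_aboveI) auto
  have "qform v \<le> infsum ?f UNIV + \<epsilon>" if "\<epsilon> > 0" for \<epsilon>
  proof -
    obtain n where n: "qform (v - d n) < \<epsilon> / 2"
      using dense \<open>\<epsilon> > 0\<close> by (meson half_gt_zero)
    have "fourier_sum {..n} (gram_schmidt d) v
        = fourier_sum {..n} (gram_schmidt d) (d n) + fourier_sum {..n} (gram_schmidt d) (v - d n)"
      using fourier_sum_add[of "{..n}" "gram_schmidt d" "d n" "v - d n"] by simp
    then have "v - fourier_sum {..n} (gram_schmidt d) v
        = (d n - fourier_sum {..n} (gram_schmidt d) (d n))
          + ((v - d n) - fourier_sum {..n} (gram_schmidt d) (v - d n))"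
      by (simp add: algebra_simps)
    then have "?E n v \<le> 2 * ?E n (d n) + 2 * ?E n (v - d n)"
      using qform_add_le by presburger
    also have "?E n (v - d n) \<le> qform (v - d n)"
      unfolding residual by (simp add: sum_nonneg)
    finally have "qform v - sum ?f {..n} < \<epsilon>"
      using n gram_schmidt_complete[of d n] by (simp add: residual)
    moreover have "sum ?f {..n} \<le> infsum ?f UNIV"
      by (rule finite_sum_le_infsum[OF summable]) auto
    ultimately show ?thesis by simp
  qed
  then have "qform v \<le> infsum ?f UNIV"
    by (rule field_le_epsilon)
  then have "infsum ?f UNIV = qform v"
    using infsum_le_finite_sums[OF summable bessel] by simp
  with summable show ?thesis
    by (metis has_sum_infsum)
qed

end

section \<open>Complex Hilbert spaces\<close>

interpretation cinner: semi_inner_product "cinner :: 'a::complex_inner \<Rightarrow> 'a \<Rightarrow> complex"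
  by standard (simp_all add: cinner_add_left cinner_scaleC_left cinner_ge_zero
      flip: cinner_commute)

lemma cinner_self: "cinner x x = complex_of_real ((norm x)\<^sup>2)"
  using cinner.self_real[of x] by (simp add: norm_eq_sqrt_cinner cinner.qform_nonneg)

lemma Re_cinner_self [simp]: "Re (cinner x x) = (norm x)\<^sup>2"
  by (simp add: cinner_self)

lemma norm_scaleC: "norm (scaleC c (x::'a::complex_inner)) = cmod c * norm x"
proof (rule power2_eq_imp_eq)
  have "cinner (scaleC c x) (scaleC c x) = (cnj c * c) * cinner x x"
    by (simp add: cinner.scaleC_left cinner.scaleC_right mult.assoc)
  also have "\<dots> = complex_of_real ((cmod c * norm x)\<^sup>2)"
    by (simp only: cnj_mult_self cinner_self power_mult_distrib of_real_mult)
  finally show "(norm (scaleC c x))\<^sup>2 = (cmod c * norm x)\<^sup>2"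
    by (metis Re_cinner_self Re_complex_of_real)
qed simp_all

lemma cmod_cinner_commute: "cmod (cinner x y) = cmod (cinner y x)"
  by (metis cinner_commute complex_mod_cnj)

lemma cmod_cinner_le: "cmod (cinner x y) \<le> norm x * norm y"
proof (rule power2_le_imp_le)
  show "(cmod (cinner x y))\<^sup>2 \<le> (norm x * norm y)\<^sup>2"
    using cinner.cauchy_schwarz[of x y] by (simp add: power_mult_distrib)
qed simp

lemma bounded_linear_cinner_right: "bounded_linear (cinner x)"
proof (rule bounded_linear_intro[where K="norm x"])
  show "cinner x (r *\<^sub>R y) = r *\<^sub>R cinner x y" for r y
    by (simp add: scaleR_scaleC cinner.scaleC_right scaleR_conv_of_real)
  show "norm (cinner x y) \<le> norm y * norm x" for y
    using cmod_cinner_le[of x y] by (simp add: mult.commute)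
qed (rule cinner.add_right)

lemma bounded_linear_cinner_left: "bounded_linear (\<lambda>y. cinner y x)"
proof (rule bounded_linear_intro[where K="norm x"])
  show "cinner (r *\<^sub>R y) x = r *\<^sub>R cinner y x" for r y
    by (simp add: scaleR_scaleC cinner_scaleC_left scaleR_conv_of_real)
  show "norm (cinner y x) \<le> norm y * norm x" for y
    by (rule cmod_cinner_le)
qed (rule cinner_add_left)

lemma closure_cspan_subset:
  fixes N :: "'a::complex_inner set"
  assumes "complex_module.subspace N" "closed N" "range u \<subseteq> N"
  shows "closure (cspan (range u)) \<subseteq> N"
  using assms by (metis closure_minimal complex_module.span_minimal)

lemma orthogonal_to_dense_span:
  fixes e :: "'a::complex_inner"
  assumes "closure (cspan (range u)) = UNIV" "\<And>i. cinner (u i) e = 0"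
  shows "e = 0"
proof -
  have "closed {v. cinner v e = 0}"
    using closed_Collect_eq[of "\<lambda>v. cinner v e" "\<lambda>_. 0"]
    by (simp add: linear_continuous_on bounded_linear_cinner_left)
  moreover have "complex_module.subspace {v. cinner v e = 0}"
    by (simp add: complex_module.subspace_def cinner_add_left cinner_scaleC_left)
  ultimately have "cinner e e = 0"
    using closure_cspan_subset[of "{v. cinner v e = 0}" u] assms by auto
  then show ?thesis
    by (simp add: cinner_eq_zero_iff)
qed

lemma dense_sequence:
  assumes "separable_space TYPE('a::topological_space)"
  shows "\<exists>d :: nat \<Rightarrow> 'a. closure (range d) = UNIV"
proof -
  obtain D :: "'a set" where "countable D" "closure D = UNIV"
    using assms unfolding separable_space_def by blast
  moreover from this have "D \<noteq> {}" by auto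
  ultimately show ?thesis
    by (metis range_from_nat_into)
qed

lemma closure_cspan_dense_sequence:
  fixes d :: "nat \<Rightarrow> 'a::complex_inner"
  assumes "closure (range d) = UNIV"
  shows "closure (cspan (range d)) = UNIV"
  using closure_mono[OF complex_module.span_superset[of "range d"]] assms by auto

lemma fourier_series_summable:
  fixes u :: "nat \<Rightarrow> 'a::chilbert_space"
  assumes "\<And>K. finite K \<Longrightarrow> (\<Sum>k\<in>K. (cmod (c k))\<^sup>2) \<le> B"
  shows "(\<lambda>k. scaleC (c k) (cinner.gram_schmidt u k)) summable_on UNIV"
proof (rule summable_on_if_norm_sum_sq_le)
  show "(\<lambda>k. (cmod (c k))\<^sup>2) summable_on UNIV"
    using assms by (intro nonneg_bdd_above_summable_on bdd_aboveI) auto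
  show "(norm (\<Sum>k\<in>G. scaleC (c k) (cinner.gram_schmidt u k)))\<^sup>2 \<le> 1 * (\<Sum>k\<in>G. (cmod (c k))\<^sup>2)"
    if "finite G" for G
    using cinner.qform_orthogonal_sum_le[OF that cinner.orthonormal_or_zero_gram_schmidt] by simp
qed simp

lemma gram_schmidt_in_cspan: "cinner.gram_schmidt u n \<in> cspan (range u)"
proof (induction n rule: less_induct)
  case (less n)
  have "cinner.gs_residual u n \<in> cspan (range u)"
    unfolding cinner.gs_residual_def cinner.fourier_sum_def
    by (intro complex_module.span_diff complex_module.span_sum complex_module.span_scale)
      (auto intro: complex_module.span_base less.IH)
  then show ?case
    by (subst cinner.gram_schmidt_eq)
      (auto intro: complex_module.span_scale complex_module.span_zero)
qed

lemma gram_schmidt_expansion: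
  "u n = cinner.fourier_sum {..n} (cinner.gram_schmidt u) (u n)"
  using cinner.gram_schmidt_complete[of u n] by simp

lemma inj_on_gram_schmidt_nonzero:
  "inj_on (cinner.gram_schmidt u) {j. cinner.gram_schmidt u j \<noteq> 0}"
proof (rule inj_onI, rule ccontr)
  fix j k
  assume "j \<in> {j. cinner.gram_schmidt u j \<noteq> 0}" "cinner.gram_schmidt u j = cinner.gram_schmidt u k"
    "j \<noteq> k"
  then show False
    using cinner.gram_schmidt_normal[of u j] cinner.gram_schmidt_orthogonal[of j k u] by simp
qed

lemma orthonormal_gram_schmidt_nonzero:
  "orthonormal (cinner.gram_schmidt u ` {j. cinner.gram_schmidt u j \<noteq> 0})"
  unfolding orthonormal_def
proof (intro conjI ballI impI)
  show "cinner e e = 1" if "e \<in> cinner.gram_schmidt u ` {j. cinner.gram_schmidt u j \<noteq> 0}" for e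
    using that cinner.gram_schmidt_normal[of u] by auto
  show "cinner e f = 0" if "e \<in> cinner.gram_schmidt u ` {j. cinner.gram_schmidt u j \<noteq> 0}"
    and "f \<in> cinner.gram_schmidt u ` {j. cinner.gram_schmidt u j \<noteq> 0}" and "e \<noteq> f" for e f
    using that by (auto intro!: cinner.gram_schmidt_orthogonal)
qed

lemma fourier_series_projection:
  fixes u :: "nat \<Rightarrow> 'a::chilbert_space"
  obtains P
  where "((\<lambda>k. scaleC (cinner (cinner.gram_schmidt u k) y) (cinner.gram_schmidt u k))
      has_sum P) UNIV"
    and "P \<in> closure (cspan (range u))" and "\<And>i. cinner (u i) (y - P) = 0"
proof -
  let ?e = "cinner.gram_schmidt u"
  let ?f = "\<lambda>k. scaleC (cinner (?e k) y) (?e k)"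
  have "?f summable_on UNIV"
    using cinner.bessel_inequality[OF _ cinner.orthonormal_or_zero_gram_schmidt]
    by (intro fourier_series_summable) blast
  then obtain P where P: "(?f has_sum P) UNIV"
    using has_sum_infsum by blast
  have "P \<in> closure (cspan (range u))"
  proof (rule Lim_in_closed_set)
    show "\<forall>\<^sub>F K in finite_subsets_at_top UNIV. sum ?f K \<in> closure (cspan (range u))"
      by (intro always_eventually allI subsetD[OF closure_subset] complex_module.span_sum
          complex_module.span_scale gram_schmidt_in_cspan)
    show "(sum ?f \<longlongrightarrow> P) (finite_subsets_at_top UNIV)"
      using P has_sum_def by blast
  qed auto
  moreover have orthogonal: "cinner (?e j) (y - P) = 0" for j
  proof -
    have "((\<lambda>k. cinner (?e j) (?f k)) has_sum cinner (?e j) P) UNIV"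
      by (rule has_sum_bounded_linear[OF bounded_linear_cinner_right P])
    moreover have
      "((\<lambda>k. cinner (?e j) (?f k)) has_sum (cinner (?e j) y * cinner (?e j) (?e j))) UNIV"
      by (rule has_sum_finite_neutralI[where B="{j}"])
        (auto simp: cinner.scaleC_right cinner.gram_schmidt_orthogonal)
    ultimately have "cinner (?e j) P = cinner (?e j) y * cinner (?e j) (?e j)"
      using has_sum_unique by blast
    then show ?thesis
      using cinner.gram_schmidt_normal[of u j] by (auto simp: cinner.right.diff)
  qed
  moreover have "cinner (u i) (y - P) = 0" for i
    by (subst gram_schmidt_expansion)
      (simp add: cinner.fourier_sum_def cinner.left.sum cinner.scaleC_left orthogonal)
  ultimately show ?thesis
    using P that by blast
qed

lemma orthogonal_exists_if_not_dense:
  fixes u :: "nat \<Rightarrow> 'a::chilbert_space"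
  assumes "closure (cspan (range u)) \<noteq> UNIV"
  obtains e where "e \<noteq> 0" and "\<And>i. cinner (u i) e = 0"
proof -
  obtain y where "y \<notin> closure (cspan (range u))"
    using assms by auto
  moreover obtain P where "P \<in> closure (cspan (range u))" "\<And>i. cinner (u i) (y - P) = 0"
    using fourier_series_projection by metis
  ultimately show ?thesis
    using that[of "y - P"] by auto
qed

lemma fourier_series_has_sum:
  fixes u :: "nat \<Rightarrow> 'a::chilbert_space"
  assumes "closure (cspan (range u)) = UNIV"
  shows "((\<lambda>k. scaleC (cinner (cinner.gram_schmidt u k) v) (cinner.gram_schmidt u k))
    has_sum v) UNIV"
proof -
  obtain P where "((\<lambda>k. scaleC (cinner (cinner.gram_schmidt u k) v) (cinner.gram_schmidt u k))
      has_sum P) UNIV" and "\<And>i. cinner (u i) (v - P) = 0"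
    using fourier_series_projection by metis
  moreover from this(2) have "v - P = 0"
    by (rule orthogonal_to_dense_span[OF assms])
  ultimately show ?thesis by simp
qed

lemma sum_sq_functional_gram_schmidt_le:
  fixes l :: "'a::complex_inner \<Rightarrow> complex"
  assumes add: "\<And>x y. l (x + y) = l x + l y" and scaleC: "\<And>c x. l (scaleC c x) = c * l x"
    and bounded: "\<And>x. cmod (l x) \<le> B * norm x" and "finite K"
  shows "(\<Sum>k\<in>K. (cmod (l (cinner.gram_schmidt u k)))\<^sup>2) \<le> B\<^sup>2"
proof -
  interpret l: additive l
    by standard (rule add)
  let ?e = "cinner.gram_schmidt u"
  define S where "S = (\<Sum>k\<in>K. (cmod (l (?e k)))\<^sup>2)"
  define v where "v = (\<Sum>k\<in>K. scaleC (cnj (l (?e k))) (?e k))"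
  have S_nonneg: "S \<ge> 0"
    unfolding S_def by (simp add: sum_nonneg)
  have "l v = complex_of_real S"
    unfolding v_def S_def l.sum scaleC by (simp add: cnj_mult_self)
  then have "S \<le> B * norm v"
    using bounded[of v] S_nonneg by simp
  then have "S\<^sup>2 \<le> B\<^sup>2 * (norm v)\<^sup>2"
    using S_nonneg by (metis power_mono power_mult_distrib)
  also have "(norm v)\<^sup>2 \<le> S"
    unfolding v_def S_def
    using cinner.qform_orthogonal_sum_le[OF assms(4) cinner.orthonormal_or_zero_gram_schmidt,
        of "\<lambda>k. cnj (l (?e k))"]
    by simp
  finally have "S * S \<le> B\<^sup>2 * S"
    by (simp add: power2_eq_square mult_left_mono)
  then show ?thesis
    using S_nonneg unfolding S_def[symmetric]
    by (cases "S = 0") (simp_all add: mult_le_cancel_right)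
qed

lemma riesz_representation:
  fixes l :: "'a::chilbert_space \<Rightarrow> complex"
  assumes "separable_space TYPE('a)"
    and add: "\<And>x y. l (x + y) = l x + l y" and scaleC: "\<And>c x. l (scaleC c x) = c * l x"
    and bounded: "\<And>x. cmod (l x) \<le> B * norm x"
  obtains w where "\<And>x. l x = cinner w x"
proof -
  obtain d :: "nat \<Rightarrow> 'a" where "closure (range d) = UNIV"
    using dense_sequence[OF assms(1)] by blast
  then have dense: "closure (cspan (range d)) = UNIV"
    by (rule closure_cspan_dense_sequence)
  let ?e = "cinner.gram_schmidt d"
  let ?f = "\<lambda>k. scaleC (cnj (l (?e k))) (?e k)"
  have "bounded_linear l"
    by (rule bounded_linear_intro[where K=B])
      (simp_all add: add scaleR_scaleC scaleC scaleR_conv_of_real bounded mult.commute)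
  have "?f summable_on UNIV"
    using sum_sq_functional_gram_schmidt_le[OF add scaleC bounded]
    by (intro fourier_series_summable) simp
  then obtain w where w: "(?f has_sum w) UNIV"
    using has_sum_infsum by blast
  have "l x = cinner w x" for x
  proof -
    have "((\<lambda>k. l (scaleC (cinner (?e k) x) (?e k))) has_sum l x) UNIV"
      by (rule has_sum_bounded_linear[OF \<open>bounded_linear l\<close> fourier_series_has_sum[OF dense]])
    moreover have "((\<lambda>k. cinner (?f k) x) has_sum cinner w x) UNIV"
      by (rule has_sum_bounded_linear[OF bounded_linear_cinner_left w])
    moreover have "(\<lambda>k. l (scaleC (cinner (?e k) x) (?e k))) = (\<lambda>k. cinner (?f k) x)"
      by (simp add: scaleC cinner_scaleC_left mult.commute)
    ultimately show ?thesis
      using has_sum_unique by metis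
  qed
  then show ?thesis by (rule that)
qed

section \<open>Bounded and positive operators\<close>

lemma bounded_op_add: "bounded_op f \<Longrightarrow> f (x + y) = f x + f y"
  by (simp add: bounded_op_def)

lemma bounded_op_scaleC: "bounded_op f \<Longrightarrow> f (scaleC c x) = scaleC c (f x)"
  by (simp add: bounded_op_def)

lemma bounded_op_zero: "bounded_op f \<Longrightarrow> f 0 = 0"
  using bounded_op_add[of f 0 0] by simp

lemma bounded_op_kraus: "kraus_family \<alpha> \<Longrightarrow> bounded_op (\<alpha> i)"
  by (simp add: kraus_family_def)

lemma bounded_linear_if_bounded_op: "bounded_op f \<Longrightarrow> bounded_linear f"
  unfolding bounded_op_def
  by (metis bounded_linear_intro scaleR_scaleC)

lemma cinner_adjoint:
  fixes f :: "'a::chilbert_space \<Rightarrow> 'a"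
  assumes "separable_space TYPE('a)" and "bounded_op f"
  shows "cinner (f x) y = cinner x (adjoint f y)"
proof -
  obtain K where K: "\<And>x. norm (f x) \<le> norm x * K"
    using assms(2) by (auto simp: bounded_op_def)
  have "\<exists>w. \<forall>x. cinner (f x) y = cinner x w" for y
  proof -
    have "cmod (cinner y (f x)) \<le> (norm y * K) * norm x" for x
      using cmod_cinner_le[of y "f x"] K[of x]
      by (smt (verit, best) mult.assoc mult.commute mult_left_mono norm_ge_zero)
    then obtain w where "\<And>x. cinner y (f x) = cinner w x"
      using riesz_representation[OF assms(1), of "\<lambda>x. cinner y (f x)"] assms(2)
      by (metis bounded_op_add bounded_op_scaleC cinner.add_right cinner.scaleC_right)
    then show ?thesis
      by (metis cinner_commute)
  qed
  then obtain g where g: "\<And>x y. cinner (f x) y = cinner x (g y)"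
    by metis
  have "adjoint f = g"
    unfolding adjoint_def
  proof (rule the_equality)
    fix g' assume g': "\<forall>x y. cinner (f x) y = cinner x (g' y)"
    show "g' = g"
    proof
      fix y
      have "cinner x (g' y - g y) = 0" for x
        using g' g by (simp add: cinner.right.diff)
      from this[of "g' y - g y"] show "g' y = g y"
        by (simp add: cinner_eq_zero_iff)
    qed
  qed (use g in blast)
  with g show ?thesis by simp
qed

lemma op_nonneg_hermitian:
  assumes "bounded_op A" and "op_nonneg A"
  shows "cinner u (A v) = cnj (cinner v (A u))"
proof -
  define a b where "a = cinner u (A v)" and "b = cinner v (A u)"
  have real: "Im (cinner z (A z)) = 0" for z
    using assms(2) by (simp add: op_nonneg_def)
  have "cinner (u + v) (A (u + v)) = cinner u (A u) + cinner v (A v) + a + b"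
    by (simp add: a_def b_def bounded_op_add[OF assms(1)] cinner_add_left cinner.add_right)
  from arg_cong[OF this, of Im] have "Im a + Im b = 0"
    by (simp add: real)
  moreover have "cinner (u + scaleC \<i> v) (A (u + scaleC \<i> v))
      = cinner u (A u) + cinner v (A v) + \<i> * a - \<i> * b"
    by (simp add: a_def b_def bounded_op_add[OF assms(1)] bounded_op_scaleC[OF assms(1)]
        cinner_add_left cinner.add_right cinner_scaleC_left cinner.scaleC_right algebra_simps)
  from arg_cong[OF this, of Im] have "Re a - Re b = 0"
    by (simp add: real)
  ultimately show ?thesis
    by (simp add: a_def [symmetric] b_def [symmetric] complex_eq_iff)
qed

lemma semi_inner_product_op:
  assumes "bounded_op A" and "op_nonneg A"
  shows "semi_inner_product (\<lambda>u v. cinner u (A v))"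
proof
  show "cinner x (A y) = cnj (cinner y (A x))" for x y
    by (rule op_nonneg_hermitian[OF assms])
  show "0 \<le> Re (cinner x (A x)) \<and> Im (cinner x (A x)) = 0" for x
    using assms(2) by (simp add: op_nonneg_def)
qed (simp_all add: cinner_add_left cinner_scaleC_left)

lemma op_nonneg_kernel:
  assumes "bounded_op A" and "op_nonneg A" and "Re (cinner y (A y)) = 0"
  shows "A y = 0"
proof -
  interpret A: semi_inner_product "\<lambda>u v. cinner u (A v)"
    by (rule semi_inner_product_op[OF assms(1,2)])
  have "cinner (A y) (A y) = 0"
    using A.null_right[OF assms(3)] .
  then show ?thesis
    by (simp add: cinner_eq_zero_iff)
qed

lemma bounded_op_eq_zero_if_dense_span:
  assumes "bounded_op A" and "\<And>i. A (u i) = 0" and "closure (cspan (range u)) = UNIV"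
  shows "A = (\<lambda>_. 0)"
proof -
  have "closed {v. A v = 0}"
    using closed_Collect_eq[of A "\<lambda>_. 0"]
    by (simp add: linear_continuous_on bounded_linear_if_bounded_op[OF assms(1)])
  moreover have "complex_module.subspace {v. A v = 0}"
    by (simp add: complex_module.subspace_def bounded_op_zero[OF assms(1)]
        bounded_op_add[OF assms(1)] bounded_op_scaleC[OF assms(1)])
  ultimately have "UNIV \<subseteq> {v. A v = 0}"
    using closure_cspan_subset[of "{v. A v = 0}" u] assms(2,3) by auto
  then show ?thesis
    by auto
qed

definition rank_one :: "'a::complex_inner \<Rightarrow> 'a \<Rightarrow> 'a" where
  "rank_one e v = scaleC (cinner e v) e"

lemma pos_trace_class_rank_one: "pos_trace_class (rank_one e)"
proof -
  have quadratic: "cinner v (rank_one e v) = complex_of_real ((cmod (cinner e v))\<^sup>2)" for v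
    by (simp add: rank_one_def cinner.scaleC_right cinner.hermitian[of v e]
        flip: complex_norm_square)
  have "bounded_op (rank_one e)"
    unfolding bounded_op_def
  proof (intro conjI allI exI)
    show "norm (rank_one e v) \<le> norm v * (norm e * norm e)" for v
      using mult_left_mono[OF cmod_cinner_le[of e v], of "norm e"]
      by (simp add: rank_one_def norm_scaleC mult_ac)
  qed (simp_all add: rank_one_def cinner.add_right cinner.scaleC_right scaleC_add_left
      scaleC_scaleC)
  moreover have "(\<lambda>b. Re (cinner b (rank_one e b))) summable_on E" if "orthonormal E" for E
  proof (rule nonneg_bdd_above_summable_on)
    have "(\<Sum>b\<in>F. Re (cinner b (rank_one e b))) \<le> (norm e)\<^sup>2" if "F \<subseteq> E" "finite F" for F
    proof -
      have "cinner.orthonormal_or_zero F id"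
        using \<open>orthonormal E\<close> that(1)
        by (auto simp: orthonormal_def cinner.orthonormal_or_zero_def)
      from cinner.bessel_inequality[OF that(2) this, of e]
      show ?thesis
        by (simp add: quadratic cmod_cinner_commute)
    qed
    then show "bdd_above (sum (\<lambda>b. Re (cinner b (rank_one e b))) ` {F. F \<subseteq> E \<and> finite F})"
      by (intro bdd_aboveI[where M="(norm e)\<^sup>2"]) auto
  qed (simp add: quadratic)
  ultimately show ?thesis
    by (simp add: pos_trace_class_def op_nonneg_def quadratic)
qed

lemma rank_one_nonzero:
  assumes "e \<noteq> 0"
  shows "rank_one e \<noteq> (\<lambda>_. 0)"
proof
  assume "rank_one e = (\<lambda>_. 0)"
  then have "scaleC (inverse (cinner e e)) (rank_one e e) = 0"
    by simp
  moreover have "cinner e e \<noteq> 0"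
    using assms by (simp add: cinner_eq_zero_iff)
  ultimately show False
    using assms by (simp add: rank_one_def scaleC_scaleC scaleC_one)
qed

lemma dense_span_if_positivity_improving:
  fixes \<alpha> :: "nat \<Rightarrow> 'a::chilbert_space \<Rightarrow> 'a"
  assumes "kraus_family \<alpha>" and "positivity_improving (kraus_map \<alpha>)" and "x \<noteq> 0"
  shows "closure (cspan (range (\<lambda>i. adjoint (\<alpha> i) x))) = UNIV"
proof (rule ccontr)
  assume "\<not> ?thesis"
  then obtain e where "e \<noteq> 0" and orthogonal: "\<And>i. cinner (adjoint (\<alpha> i) x) e = 0"
    using orthogonal_exists_if_not_dense[of "\<lambda>i. adjoint (\<alpha> i) x"] by auto
  have "\<alpha> i (rank_one e (adjoint (\<alpha> i) x)) = 0" for i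
    using orthogonal[of i] bounded_op_zero[OF bounded_op_kraus[OF assms(1)]]
    by (simp add: rank_one_def cinner.hermitian[of e "adjoint (\<alpha> i) x"])
  then have "kraus_map \<alpha> (rank_one e) x = 0"
    by (simp add: kraus_map_def)
  moreover have "op_pos (kraus_map \<alpha> (rank_one e))"
    using assms(2) pos_trace_class_rank_one rank_one_nonzero[OF \<open>e \<noteq> 0\<close>]
    unfolding positivity_improving_def by blast
  ultimately have "0 < Re (cinner x 0)"
    using assms(3) unfolding op_pos_def by metis
  then show False
    by simp
qed

section \<open>Convergence of the Kraus series\<close>

lemma quadratic_form_le_norm_sq:
  assumes "bounded_op A"
  obtains K :: real where "K > 0" and "\<And>w. Re (cinner w (A w)) \<le> K * (norm w)\<^sup>2"
proof -
  obtain K0 where K0: "\<And>x. norm (A x) \<le> norm x * K0"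
    using assms by (auto simp: bounded_op_def)
  have "Re (cinner w (A w)) \<le> max K0 1 * (norm w)\<^sup>2" for w
  proof -
    have "Re (cinner w (A w)) \<le> norm w * norm (A w)"
      using complex_Re_le_cmod cmod_cinner_le order_trans by blast
    also have "\<dots> \<le> norm w * (norm w * max K0 1)"
      using K0[of w] by (intro mult_left_mono) (auto intro: order_trans[OF _ mult_left_mono])
    finally show ?thesis
      by (simp add: power2_eq_square mult_ac)
  qed
  then show ?thesis
    using that[of "max K0 1"] by simp
qed

lemma quadratic_form_decomposition:
  fixes A :: "'a::chilbert_space \<Rightarrow> 'a"
  assumes "separable_space TYPE('a)" and "bounded_op A" and "op_nonneg A"
  obtains g :: "nat \<Rightarrow> 'a"
  where "\<And>v. ((\<lambda>k. (cmod (cinner (g k) v))\<^sup>2) has_sum Re (cinner v (A v))) UNIV"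
proof -
  interpret A: semi_inner_product "\<lambda>u v. cinner u (A v)"
    by (rule semi_inner_product_op[OF assms(2,3)])
  obtain d :: "nat \<Rightarrow> 'a" where d: "closure (range d) = UNIV"
    using dense_sequence[OF assms(1)] by blast
  obtain K where "K > 0" and K: "\<And>w. Re (cinner w (A w)) \<le> K * (norm w)\<^sup>2"
    using quadratic_form_le_norm_sq[OF assms(2)] by blast
  have "\<exists>n. Re (cinner (v - d n) (A (v - d n))) < \<epsilon>" if "\<epsilon> > 0" for v \<epsilon>
  proof -
    obtain n where n: "dist (d n) v < sqrt (\<epsilon> / K)"
      using d \<open>\<epsilon> > 0\<close> \<open>K > 0\<close> closure_approachable[of v "range d"] by force
    have "Re (cinner (v - d n) (A (v - d n))) \<le> K * (norm (v - d n))\<^sup>2"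
      by (rule K)
    also have "\<dots> < K * (sqrt (\<epsilon> / K))\<^sup>2"
      using n \<open>K > 0\<close> by (intro mult_strict_left_mono power_strict_mono)
        (auto simp: dist_norm norm_minus_commute)
    also have "\<dots> = \<epsilon>"
      using \<open>\<epsilon> > 0\<close> \<open>K > 0\<close> by simp
    finally show ?thesis ..
  qed
  then have "((\<lambda>k. (cmod (cinner (A.gram_schmidt d k) (A v)))\<^sup>2) has_sum Re (cinner v (A v))) UNIV"
    for v
    by (rule A.parseval)
  moreover have "cinner h (A v) = cinner (A h) v" for h v
    using op_nonneg_hermitian[OF assms(2,3), of h v] by (simp add: cinner_commute[of "A h"])
  ultimately show ?thesis
    using that[of "\<lambda>k. A (A.gram_schmidt d k)"] by simp
qed

lemma sum_norm_sq_bounded_if_pos_trace_class: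
  fixes A :: "'a::chilbert_space \<Rightarrow> 'a" and g :: "nat \<Rightarrow> 'a"
  assumes "pos_trace_class A"
    and decomposition: "\<And>v. ((\<lambda>k. (cmod (cinner (g k) v))\<^sup>2) has_sum Re (cinner v (A v))) UNIV"
  obtains T where "\<And>K. finite K \<Longrightarrow> (\<Sum>k\<in>K. (norm (g k))\<^sup>2) \<le> T"
proof -
  let ?f = "cinner.gram_schmidt g"
  define J where "J = {j. ?f j \<noteq> 0}"
  define q where "q v = Re (cinner v (A v))" for v
  have q_nonneg: "q v \<ge> 0" for v
    using assms(1) by (simp add: q_def pos_trace_class_def op_nonneg_def)
  have "inj_on ?f J" "orthonormal (?f ` J)"
    unfolding J_def by (rule inj_on_gram_schmidt_nonzero orthonormal_gram_schmidt_nonzero)+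
  then have summable: "q summable_on ?f ` J"
    using assms(1) unfolding pos_trace_class_def q_def[abs_def] by blast
  have "(\<Sum>k\<in>K. (norm (g k))\<^sup>2) \<le> infsum q (?f ` J)" if "finite K" for K
  proof -
    obtain n where n: "K \<subseteq> {..n}"
      using \<open>finite K\<close> finite_nat_iff_bounded_le by blast
    have "(norm (g k))\<^sup>2 = (\<Sum>j\<le>n. (cmod (cinner (g k) (?f j)))\<^sup>2)" if "k \<le> n" for k
      using cinner.qform_eq_sum_gram_schmidt[of "{..n}" k g] that
      by (simp add: cmod_cinner_commute)
    then have "(\<Sum>k\<in>K. (norm (g k))\<^sup>2) = (\<Sum>k\<in>K. \<Sum>j\<le>n. (cmod (cinner (g k) (?f j)))\<^sup>2)"
      using n by (intro sum.cong) auto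
    also have "\<dots> = (\<Sum>j\<le>n. \<Sum>k\<in>K. (cmod (cinner (g k) (?f j)))\<^sup>2)"
      by (rule sum.swap)
    also have "\<dots> \<le> (\<Sum>j\<le>n. q (?f j))"
      using decomposition unfolding q_def
      by (intro sum_mono finite_sum_le_has_sum[OF _ \<open>finite K\<close>]) auto
    also have "\<dots> = (\<Sum>j\<in>{..n} \<inter> J. q (?f j))"
      by (rule sum.mono_neutral_right) (auto simp: J_def q_def)
    also have "\<dots> = sum q (?f ` ({..n} \<inter> J))"
      by (rule sum.reindex[symmetric, unfolded comp_def]) (meson \<open>inj_on ?f J\<close> inj_on_Int)
    also have "\<dots> \<le> infsum q (?f ` J)"
      by (rule finite_sum_le_infsum[OF summable]) (auto simp: q_nonneg)
    finally show ?thesis .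
  qed
  then show ?thesis
    by (rule that)
qed

lemma kraus_family_bound:
  fixes \<alpha> :: "nat \<Rightarrow> 'a::chilbert_space \<Rightarrow> 'a"
  assumes "separable_space TYPE('a)" and "kraus_family \<alpha>"
  obtains C where "C \<ge> 0" and "\<And>K v. finite K \<Longrightarrow> (\<Sum>i\<in>K. (norm (\<alpha> i v))\<^sup>2) \<le> C * (norm v)\<^sup>2"
proof -
  obtain c where c: "\<And>K v. finite K \<Longrightarrow>
      Re (cinner v (\<Sum>i\<in>K. adjoint (\<alpha> i) (\<alpha> i v))) \<le> c * Re (cinner v v)"
    using assms(2) unfolding kraus_family_def by blast
  have "(\<Sum>i\<in>K. (norm (\<alpha> i v))\<^sup>2) \<le> max c 0 * (norm v)\<^sup>2" if "finite K" for K v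
  proof -
    have "Re (cinner v (\<Sum>i\<in>K. adjoint (\<alpha> i) (\<alpha> i v))) = (\<Sum>i\<in>K. (norm (\<alpha> i v))\<^sup>2)"
      by (simp add: cinner.right.sum Re_sum
          flip: cinner_adjoint[OF assms(1) bounded_op_kraus[OF assms(2)]])
    then show ?thesis
      using c[OF that, of v] by (smt (verit) mult_right_mono zero_le_power2 Re_cinner_self)
  qed
  then show ?thesis
    using that[of "max c 0"] by simp
qed

context
  fixes \<alpha> :: "nat \<Rightarrow> 'a::chilbert_space \<Rightarrow> 'a" and A :: "'a \<Rightarrow> 'a"
  assumes separable: "separable_space TYPE('a)" and kraus: "kraus_family \<alpha>"
    and trace_class: "pos_trace_class A"
begin

lemma bounded_op_trace_class: "bounded_op A" and op_nonneg_trace_class: "op_nonneg A"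
  using trace_class by (simp_all add: pos_trace_class_def)

interpretation A: semi_inner_product "\<lambda>u v. cinner u (A v)"
  by (rule semi_inner_product_op[OF bounded_op_trace_class op_nonneg_trace_class])

lemma cinner_kraus_adjoint: "cinner x (\<alpha> i v) = cinner (adjoint (\<alpha> i) x) v"
  using cinner_adjoint[OF separable bounded_op_kraus[OF kraus], of i v x]
  by (simp add: cinner_commute[of x] cinner_commute[of "adjoint (\<alpha> i) x"])

lemma kraus_quadratic_form_bound:
  obtains M where "M \<ge> 0" and "\<And>G w. finite G \<Longrightarrow> (\<Sum>i\<in>G. A.qform (adjoint (\<alpha> i) w)) \<le> M * (norm w)\<^sup>2"
proof -
  obtain g :: "nat \<Rightarrow> 'a" where g: "\<And>v. ((\<lambda>k. (cmod (cinner (g k) v))\<^sup>2) has_sum A.qform v) UNIV"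
    using quadratic_form_decomposition[OF separable bounded_op_trace_class op_nonneg_trace_class]
    by blast
  obtain T where T: "\<And>K. finite K \<Longrightarrow> (\<Sum>k\<in>K. (norm (g k))\<^sup>2) \<le> T"
    using sum_norm_sq_bounded_if_pos_trace_class[OF trace_class g] by blast
  obtain C where "C \<ge> 0" and C: "\<And>K v. finite K \<Longrightarrow> (\<Sum>i\<in>K. (norm (\<alpha> i v))\<^sup>2) \<le> C * (norm v)\<^sup>2"
    using kraus_family_bound[OF separable kraus] by blast
  have "(\<Sum>i\<in>G. A.qform (adjoint (\<alpha> i) w)) \<le> C * T * (norm w)\<^sup>2" if "finite G" for G w
  proof (rule has_sum_le_finite_sums)
    show "((\<lambda>k. \<Sum>i\<in>G. (cmod (cinner (\<alpha> i (g k)) w))\<^sup>2)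
        has_sum (\<Sum>i\<in>G. A.qform (adjoint (\<alpha> i) w))) UNIV"
      using g by (intro has_sum_sum[OF that])
        (simp add: cinner_adjoint[OF separable bounded_op_kraus[OF kraus]])
    fix K :: "nat set" assume "finite K"
    have "(cmod (cinner (\<alpha> i (g k)) w))\<^sup>2 \<le> (norm (\<alpha> i (g k)))\<^sup>2 * (norm w)\<^sup>2" for i k
      using power_mono[OF cmod_cinner_le, of _ _ 2] by (simp add: power_mult_distrib)
    then have "(\<Sum>k\<in>K. \<Sum>i\<in>G. (cmod (cinner (\<alpha> i (g k)) w))\<^sup>2)
        \<le> (\<Sum>k\<in>K. (\<Sum>i\<in>G. (norm (\<alpha> i (g k)))\<^sup>2) * (norm w)\<^sup>2)"
      by (simp add: sum_mono sum_distrib_right)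
    also have "\<dots> \<le> (\<Sum>k\<in>K. C * (norm (g k))\<^sup>2 * (norm w)\<^sup>2)"
      using C[OF that] by (intro sum_mono mult_right_mono) simp_all
    also have "\<dots> = C * (norm w)\<^sup>2 * (\<Sum>k\<in>K. (norm (g k))\<^sup>2)"
      by (simp add: sum_distrib_left mult_ac)
    also have "\<dots> \<le> C * T * (norm w)\<^sup>2"
      using mult_left_mono[OF T[OF \<open>finite K\<close>], of "C * (norm w)\<^sup>2"] \<open>C \<ge> 0\<close>
      by (simp add: mult_ac)
    finally show "(\<Sum>k\<in>K. \<Sum>i\<in>G. (cmod (cinner (\<alpha> i (g k)) w))\<^sup>2) \<le> C * T * (norm w)\<^sup>2" .
  qed
  moreover have "C * T \<ge> 0"
    using T[of "{}"] \<open>C \<ge> 0\<close> by simp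
  ultimately show ?thesis
    using that by blast
qed

lemma kraus_quadratic_form_summable: "(\<lambda>i. A.qform (adjoint (\<alpha> i) x)) summable_on UNIV"
proof (rule nonneg_bdd_above_summable_on)
  obtain M where "\<And>G. finite G \<Longrightarrow> (\<Sum>i\<in>G. A.qform (adjoint (\<alpha> i) x)) \<le> M * (norm x)\<^sup>2"
    using kraus_quadratic_form_bound by metis
  then show "bdd_above (sum (\<lambda>i. A.qform (adjoint (\<alpha> i) x)) ` {F. F \<subseteq> UNIV \<and> finite F})"
    by (intro bdd_aboveI[where M="M * (norm x)\<^sup>2"]) auto
qed (rule A.qform_nonneg)

(* For the partial sum S, ||S||^2 = \<Sum>_i <\<alpha>_i^* S, A y_i>; Cauchy--Schwarz for <u, A v>, then
   for the sum, and the bound at w = S give ||S||^4 \<le> M ||S||^2 \<Sum>_i <y_i, A y_i>. *)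
lemma norm_kraus_sum_sq_le:
  assumes "M \<ge> 0"
    and bound: "\<And>G w. finite G \<Longrightarrow> (\<Sum>i\<in>G. A.qform (adjoint (\<alpha> i) w)) \<le> M * (norm w)\<^sup>2"
    and "finite G"
  shows "(norm (\<Sum>i\<in>G. \<alpha> i (A (y i))))\<^sup>2 \<le> M * (\<Sum>i\<in>G. A.qform (y i))"
proof -
  define S where "S = (\<Sum>i\<in>G. \<alpha> i (A (y i)))"
  define z where "z i = adjoint (\<alpha> i) S" for i
  have "(norm S)\<^sup>2 = Re (\<Sum>i\<in>G. cinner (z i) (A (y i)))"
    by (simp add: S_def z_def cinner.right.sum cinner_kraus_adjoint flip: Re_cinner_self)
  also have "\<dots> \<le> (\<Sum>i\<in>G. cmod (cinner (z i) (A (y i))))"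
    by (simp add: Re_sum sum_mono complex_Re_le_cmod)
  finally have "((norm S)\<^sup>2)\<^sup>2 \<le> (\<Sum>i\<in>G. cmod (cinner (z i) (A (y i))))\<^sup>2"
    by (rule power_mono) simp
  also have "\<dots> \<le> (\<Sum>i\<in>G. A.qform (z i)) * (\<Sum>i\<in>G. A.qform (y i))"
    by (rule A.sum_cmod_sq_le)
  also have "\<dots> \<le> M * (norm S)\<^sup>2 * (\<Sum>i\<in>G. A.qform (y i))"
    using bound[OF assms(3), of S] by (simp add: z_def mult_right_mono sum_nonneg A.qform_nonneg)
  finally have cancel: "(norm S)\<^sup>2 * (norm S)\<^sup>2 \<le> (norm S)\<^sup>2 * (M * (\<Sum>i\<in>G. A.qform (y i)))"
    by (simp only: power2_eq_square mult_ac)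
  have "(norm S)\<^sup>2 \<le> M * (\<Sum>i\<in>G. A.qform (y i))"
  proof (cases "S = 0")
    case True
    then show ?thesis
      using \<open>M \<ge> 0\<close> by (simp add: sum_nonneg A.qform_nonneg)
  next
    case False
    then show ?thesis
      by (intro mult_left_le_imp_le[OF cancel]) simp
  qed
  then show ?thesis
    by (simp add: S_def)
qed

lemma kraus_series_summable: "(\<lambda>i. \<alpha> i (A (adjoint (\<alpha> i) x))) summable_on UNIV"
proof -
  obtain M where "M \<ge> 0"
    and "\<And>G w. finite G \<Longrightarrow> (\<Sum>i\<in>G. A.qform (adjoint (\<alpha> i) w)) \<le> M * (norm w)\<^sup>2"
    using kraus_quadratic_form_bound by blast
  then have "(norm (\<Sum>i\<in>G. \<alpha> i (A (adjoint (\<alpha> i) x))))\<^sup>2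
      \<le> M * (\<Sum>i\<in>G. A.qform (adjoint (\<alpha> i) x))" if "finite G" for G
    by (rule norm_kraus_sum_sq_le[OF _ _ that])
  then show ?thesis
    by (rule summable_on_if_norm_sum_sq_le[OF kraus_quadratic_form_summable A.qform_nonneg])
qed

(* Since kraus_map is an unconditional sum, which is 0 for non-summable families, this
   identity rests on kraus_series_summable. *)
lemma cinner_kraus_map:
  "cinner x (kraus_map \<alpha> A x) = complex_of_real (\<Sum>\<^sub>\<infinity>i. A.qform (adjoint (\<alpha> i) x))"
proof -
  have "((\<lambda>i. cinner x (\<alpha> i (A (adjoint (\<alpha> i) x)))) has_sum cinner x (kraus_map \<alpha> A x)) UNIV"
    unfolding kraus_map_def
    by (intro has_sum_bounded_linear[OF bounded_linear_cinner_right] has_sum_infsum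
        kraus_series_summable)
  moreover have "((\<lambda>i. complex_of_real (A.qform (adjoint (\<alpha> i) x)))
      has_sum complex_of_real (\<Sum>\<^sub>\<infinity>i. A.qform (adjoint (\<alpha> i) x))) UNIV"
    by (intro has_sum_of_real has_sum_infsum kraus_quadratic_form_summable)
  moreover have "cinner x (\<alpha> i (A (adjoint (\<alpha> i) x))) = complex_of_real (A.qform (adjoint (\<alpha> i) x))"
    for i
    by (subst cinner_kraus_adjoint) (rule A.self_real)
  ultimately show ?thesis
    using has_sum_unique by force
qed

end

lemma positivity_improving_if_dense_span:
  fixes \<alpha> :: "nat \<Rightarrow> 'a::chilbert_space \<Rightarrow> 'a"
  assumes "separable_space TYPE('a)" and "kraus_family \<alpha>"
    and dense: "\<forall>x::'a. x \<noteq> 0 \<longrightarrow> closure (cspan (range (\<lambda>i. adjoint (\<alpha> i) x))) = UNIV"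
  shows "positivity_improving (kraus_map \<alpha>)"
  unfolding positivity_improving_def op_pos_def
proof (intro allI impI)
  fix A :: "'a \<Rightarrow> 'a" and x :: 'a
  assume A: "pos_trace_class A \<and> A \<noteq> (\<lambda>_. 0)" and "x \<noteq> 0"
  then have "bounded_op A" and "op_nonneg A"
    by (simp_all add: pos_trace_class_def)
  define q where "q i = Re (cinner (adjoint (\<alpha> i) x) (A (adjoint (\<alpha> i) x)))" for i
  have "q i \<ge> 0" for i
    using \<open>op_nonneg A\<close> by (simp add: q_def op_nonneg_def)
  have "\<exists>j. q j \<noteq> 0"
  proof (rule ccontr)
    assume "\<not> ?thesis"
    then have "A (adjoint (\<alpha> j) x) = 0" for j
      by (intro op_nonneg_kernel[OF \<open>bounded_op A\<close> \<open>op_nonneg A\<close>]) (simp add: q_def)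
    then have "A = (\<lambda>_. 0)"
      using dense \<open>x \<noteq> 0\<close> by (intro bounded_op_eq_zero_if_dense_span[OF \<open>bounded_op A\<close>]) auto
    with A show False by simp
  qed
  then obtain j where "q j > 0"
    using \<open>\<And>i. q i \<ge> 0\<close> by (metis order_less_le)
  also have "q j \<le> (\<Sum>\<^sub>\<infinity>i. q i)"
    using kraus_quadratic_form_summable[OF assms(1,2) conjunct1[OF A], of x] \<open>\<And>i. q i \<ge> 0\<close>
    by (intro finite_sum_le_infsum[where B="{j}", simplified]) (simp_all add: q_def)
  finally show "0 < Re (cinner x (kraus_map \<alpha> A x)) \<and> Im (cinner x (kraus_map \<alpha> A x)) = 0"
    using cinner_kraus_map[OF assms(1,2) conjunct1[OF A], of x] by (simp add: q_def)
qed

theorem lemma3p3: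
  fixes \<alpha> :: "nat \<Rightarrow> 'a::chilbert_space \<Rightarrow> 'a"
  assumes "separable_space TYPE('a)"
    and "kraus_family \<alpha>"
  shows "positivity_improving (kraus_map \<alpha>) \<longleftrightarrow>
         (\<forall>x::'a. x \<noteq> 0 \<longrightarrow> closure (cspan (range (\<lambda>i. adjoint (\<alpha> i) x))) = UNIV)"
  using dense_span_if_positivity_improving[OF assms(2)] positivity_improving_if_dense_span[OF assms]
  by blast

end
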